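(* For $n\ge 1$, let $N(n)$ be the number of words $u\in\{0,1\}^*$ that begin and end with $1$ (the word $u=1$ is allowed), contain exactly $n$ occurrences of $1$, and are such that the configuration $0u0$ can be reduced to a single peg. Then \[ N(n)=\begin{cases}1 & n=1,\\ 1 & n=2,\\ 2 & n=3,\\ n^2-7n+15 & n\ge 4,\ n \text{ even},\\ n^2-7n+16 & n\ge 5,\ n\text{ odd}.\end{cases} \]
   Context: One-dimensional Peg Solitaire: a configuration is a finite word $w=c_0c_1\cdots c_{n-1}\in\{0,1\}^*$, describing a row of $n$ consecutive sites, where $c_i=1$ means site $i$ holds a peg and $c_i=0$ means site $i$ is a hole. The board consists exactly of these sites (no sites outside the word may be used). A move (hop) takes three consecutive sites $i,i+1,i+2$ within the board such that one end site and the middle site hold pegs and the other end site is a hole, moves the end peg to the hole, and removes the middle peg (i.e. $110\to001$ or $011\to100$). A configuration can be reduced to a single peg if some sequence of hops leads to a configuration with exactly one peg. *)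

theory Defs
  imports Main
begin

text \<open>A configuration is a list of booleans; True = peg, False = hole.
  The board consists exactly of the sites of the list.\<close>

definition hop :: "bool list \<Rightarrow> bool list \<Rightarrow> bool" where
  "hop c d \<longleftrightarrow> (\<exists>i. i + 2 < length c \<and>
     ((c ! i \<and> c ! (i+1) \<and> \<not> c ! (i+2) \<and> d = c[i := False, i+1 := False, i+2 := True]) \<or>
      (\<not> c ! i \<and> c ! (i+1) \<and> c ! (i+2) \<and> d = c[i := True, i+1 := False, i+2 := False])))"

definition num_pegs :: "bool list \<Rightarrow> nat" where
  "num_pegs c = length (filter id c)"

definition reducible_to_one :: "bool list \<Rightarrow> bool" where
  "reducible_to_one c \<longleftrightarrow> (\<exists>d. hop\<^sup>*\<^sup>* c d \<and> num_pegs d = 1)"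

definition N :: "nat \<Rightarrow> nat" where
  "N n = card {u. u \<noteq> [] \<and> hd u \<and> last u \<and> num_pegs u = n
                 \<and> reducible_to_one ([False] @ u @ [False])}"

end

theory Submission
  imports Defs
begin

text \<open>Reducibility to one peg is a regular property of configurations. We give an 18-state
  automaton and prove that it accepts exactly the reducible configurations. Soundness: single
  pegs are accepted, and accepted words are closed under undoing a hop, because a simulation
  preorder on states relates the state reached after \<open>001\<close> or \<open>100\<close> to the one
  reached after \<open>110\<close> or \<open>011\<close>. Completeness: every accepted word with at least two
  pegs has a hop to an accepted word; this is verified by running the automaton simultaneously
  on all words obtained from the input by one hop. Counting the accepted words \<open>0u0\<close>
  then becomes a linear recurrence in the number of pegs along the transitions of the automaton,
  which is solved in closed form state by state.\<close>

lemma num_pegs_Nil [simp]: "num_pegs [] = 0"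
  and num_pegs_Cons [simp]: "num_pegs (a # w) = of_bool a + num_pegs w"
  and num_pegs_append [simp]: "num_pegs (v @ w) = num_pegs v + num_pegs w"
  by (simp_all add: num_pegs_def)

lemma num_pegs_eq_0_iff: "num_pegs w = 0 \<longleftrightarrow> True \<notin> set w"
  by (induction w) auto

definition hop_lhs :: "bool \<Rightarrow> bool list" where
  "hop_lhs right = (if right then [True, True, False] else [False, True, True])"

definition hop_rhs :: "bool \<Rightarrow> bool list" where
  "hop_rhs right = (if right then [False, False, True] else [True, False, False])"

lemma hop_iff: "hop c d \<longleftrightarrow> (\<exists>x y r. c = x @ hop_lhs r @ y \<and> d = x @ hop_rhs r @ y)"
proof
  assume "hop c d"
  then obtain i where i: "i + 2 < length c" and h:
    "(c ! i \<and> c ! (i+1) \<and> \<not> c ! (i+2) \<and> d = c[i := False, i+1 := False, i+2 := True]) \<or>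
     (\<not> c ! i \<and> c ! (i+1) \<and> c ! (i+2) \<and> d = c[i := True, i+1 := False, i+2 := False])"
    unfolding hop_def by blast
  obtain x y a1 a2 a3 where c: "c = x @ [a1, a2, a3] @ y" and "length x = i"
  proof
    have "drop i c = [c ! i, c ! (i+1), c ! (i+2)] @ drop (i + 3) c"
      using i by (simp add: Cons_nth_drop_Suc numeral_3_eq_3)
    then show "c = take i c @ [c ! i, c ! (i+1), c ! (i+2)] @ drop (i + 3) c"
      by (metis append_take_drop_id)
  qed (use i in simp)
  then have "c = x @ hop_lhs a1 @ y \<and> d = x @ hop_rhs a1 @ y"
    using h by (auto simp: c nth_append list_update_append hop_lhs_def hop_rhs_def)
  then show "\<exists>x y r. c = x @ hop_lhs r @ y \<and> d = x @ hop_rhs r @ y"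
    by blast
next
  assume "\<exists>x y r. c = x @ hop_lhs r @ y \<and> d = x @ hop_rhs r @ y"
  then obtain x y r where "c = x @ hop_lhs r @ y" "d = x @ hop_rhs r @ y"
    by blast
  then show "hop c d"
    unfolding hop_def
    by (intro exI[of _ "length x"]) (cases r; simp add: hop_lhs_def hop_rhs_def nth_append list_update_append)
qed

lemma hop_append: "hop c d \<Longrightarrow> hop (c @ z) (d @ z)"
  by (fastforce simp: hop_iff)

lemma num_pegs_hop: "hop c d \<Longrightarrow> num_pegs c = Suc (num_pegs d)"
  by (auto simp: hop_iff hop_lhs_def hop_rhs_def)

lemma reducible_to_one_hop: "hop c d \<Longrightarrow> reducible_to_one d \<Longrightarrow> reducible_to_one c"
  unfolding reducible_to_one_def by (meson converse_rtranclp_into_rtranclp)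

section \<open>The automaton\<close>

datatype state = Q0 | Q1 | Q2 | Q3 | Q4 | Q5 | Q6 | Q7 | Q8 | Q9
  | Q10 | Q11 | Q12 | Q13 | Q14 | Q15 | Q16 | Q17

fun delta :: "state \<Rightarrow> bool \<Rightarrow> state" where
  "delta Q0 a = (if a then Q2 else Q1)" |
  "delta Q1 a = (if a then Q3 else Q1)" |
  "delta Q2 a = (if a then Q5 else Q4)" |
  "delta Q3 a = (if a then Q6 else Q4)" |
  "delta Q4 a = (if a then Q8 else Q7)" |
  "delta Q5 a = (if a then Q9 else Q3)" |
  "delta Q6 a = (if a then Q9 else Q3)" |
  "delta Q7 a = (if a then Q10 else Q7)" |
  "delta Q8 a = (if a then Q4 else Q11)" |
  "delta Q9 a = (if a then Q13 else Q12)" |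
  "delta Q10 a = Q10" |
  "delta Q11 a = (if a then Q14 else Q10)" |
  "delta Q12 a = (if a then Q15 else Q10)" |
  "delta Q13 a = (if a then Q16 else Q8)" |
  "delta Q14 a = (if a then Q7 else Q11)" |
  "delta Q15 a = (if a then Q11 else Q10)" |
  "delta Q16 a = (if a then Q17 else Q12)" |
  "delta Q17 a = (if a then Q16 else Q14)"

definition all_states :: "state list" where
  "all_states = [Q0, Q1, Q2, Q3, Q4, Q5, Q6, Q7, Q8, Q9, Q10, Q11, Q12, Q13, Q14, Q15, Q16, Q17]"

lemma in_all_states: "q \<in> set all_states"
  by (cases q) (simp_all add: all_states_def)

definition accepting :: "state \<Rightarrow> bool" where
  "accepting q \<longleftrightarrow> q \<in> {Q2, Q3, Q4, Q6, Q7}"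

definition run :: "state \<Rightarrow> bool list \<Rightarrow> state" where
  "run = foldl delta"

lemma run_Nil [simp]: "run q [] = q"
  and run_Cons [simp]: "run q (a # w) = run (delta q a) w"
  and run_append [simp]: "run q (v @ w) = run (run q v) w"
  by (simp_all add: run_def)

lemma run_Q10 [simp]: "run Q10 w = Q10"
  by (induction w) auto

lemma run_without_pegs:
  assumes "\<And>p. p \<in> A \<Longrightarrow> delta p False \<in> A" and "q \<in> A" and "True \<notin> set w"
  shows "run q w \<in> A"
  using assms(2,3) by (induction w arbitrary: q) (auto intro: assms(1))

lemma accepting_one_peg:
  assumes "num_pegs w = 1"
  shows "accepting (run Q0 w)"
proof -
  have "True \<in> set w"
    using assms by (metis num_pegs_eq_0_iff zero_neq_one)
  then obtain x y where w: "w = x @ True # y" and "True \<notin> set x"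
    by (blast dest: split_list_first)
  moreover have "True \<notin> set y"
    using assms w \<open>True \<notin> set x\<close> num_pegs_eq_0_iff by fastforce
  moreover have "run Q0 x \<in> {Q0, Q1}"
    using \<open>True \<notin> set x\<close> by (intro run_without_pegs) auto
  ultimately have "run (delta (run Q0 x) True) y \<in> {Q2, Q3, Q4, Q7}"
    by (intro run_without_pegs) auto
  then show ?thesis
    using w by (auto simp: accepting_def)
qed

section \<open>Soundness\<close>

definition simulated :: "state \<Rightarrow> state \<Rightarrow> bool" where
  "simulated s t \<longleftrightarrow> s = t \<or> s = Q10 \<or> (s, t) \<in> set
     [(Q0, Q1), (Q2, Q3), (Q5, Q6), (Q7, Q2), (Q7, Q3), (Q7, Q4), (Q7, Q6), (Q11, Q1), (Q11, Q4),
      (Q12, Q4), (Q14, Q0), (Q14, Q1), (Q14, Q3), (Q14, Q8), (Q15, Q8), (Q16, Q2), (Q16, Q3),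
      (Q16, Q9), (Q17, Q0), (Q17, Q1), (Q17, Q5), (Q17, Q6), (Q17, Q13)]"

lemma simulated_closed:
  "list_all (\<lambda>s. list_all (\<lambda>t. simulated s t \<longrightarrow> (accepting s \<longrightarrow> accepting t)
       \<and> simulated (delta s True) (delta t True) \<and> simulated (delta s False) (delta t False))
     all_states) all_states"
  by code_simp

lemma simulated_hop:
  "list_all (\<lambda>q. list_all (\<lambda>r. simulated (run q (hop_rhs r)) (run q (hop_lhs r)))
     [True, False]) all_states"
  unfolding hop_lhs_def hop_rhs_def by code_simp

lemma simulated_run: "simulated s t \<Longrightarrow> accepting (run s w) \<Longrightarrow> accepting (run t w)"
proof (induction w arbitrary: s t)
  case Nil
  then show ?case
    using simulated_closed in_all_states[of s] in_all_states[of t] by (auto simp: list_all_iff)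
next
  case (Cons a w)
  have "simulated (delta s a) (delta t a)"
    using Cons.prems simulated_closed in_all_states[of s] in_all_states[of t]
    by (cases a) (auto simp: list_all_iff)
  then show ?case
    using Cons by simp
qed

lemma accepting_hop_backward: "hop c d \<Longrightarrow> accepting (run Q0 d) \<Longrightarrow> accepting (run Q0 c)"
proof -
  assume "hop c d" "accepting (run Q0 d)"
  then obtain x y r where c: "c = x @ hop_lhs r @ y" and d: "d = x @ hop_rhs r @ y"
    by (auto simp: hop_iff)
  have "simulated (run (run Q0 x) (hop_rhs r)) (run (run Q0 x) (hop_lhs r))"
    using simulated_hop in_all_states[of "run Q0 x"] by (cases r) (auto simp: list_all_iff)
  then show ?thesis
    using \<open>accepting (run Q0 d)\<close> c d simulated_run by auto
qed

lemma reducible_imp_accepting: "reducible_to_one c \<Longrightarrow> accepting (run Q0 c)"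
proof -
  assume "reducible_to_one c"
  then obtain d where "hop\<^sup>*\<^sup>* c d" "num_pegs d = 1"
    by (auto simp: reducible_to_one_def)
  then show ?thesis
    by (induction rule: converse_rtranclp_induct) (auto intro: accepting_one_peg accepting_hop_backward)
qed

section \<open>Completeness\<close>

datatype candidate = Hopped state | Partial nat bool state

fun candidate_valid :: "bool list \<Rightarrow> candidate \<Rightarrow> bool" where
  "candidate_valid c (Hopped q) \<longleftrightarrow> (\<exists>d. hop c d \<and> run Q0 d = q)"
| "candidate_valid c (Partial k r q) \<longleftrightarrow> (k = 1 \<or> k = 2) \<and>
     (\<exists>x. c = x @ take k (hop_lhs r) \<and> run Q0 (x @ take k (hop_rhs r)) = q)"

fun candidate_step :: "candidate \<Rightarrow> bool \<Rightarrow> candidate list" where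
  "candidate_step (Hopped q) a = [Hopped (delta q a)]"
| "candidate_step (Partial k r q) a =
     (if a \<noteq> hop_lhs r ! k then []
      else if k = 2 then [Hopped (delta q (hop_rhs r ! 2))]
      else [Partial (Suc k) r (delta q (hop_rhs r ! k))])"

definition candidate_successors :: "state \<Rightarrow> candidate list \<Rightarrow> bool \<Rightarrow> candidate list" where
  "candidate_successors p S a =
     [Partial 1 r (delta p (hop_rhs r ! 0)). r \<leftarrow> [True, False], a = hop_lhs r ! 0]
     @ concat (map (\<lambda>s. candidate_step s a) S)"

lemma candidate_step_valid:
  assumes "candidate_valid c s" and "s' \<in> set (candidate_step s a)"
  shows "candidate_valid (c @ [a]) s'"
proof (cases s)
  case (Hopped q)
  then show ?thesis
    using assms by (auto intro: hop_append)
next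
  case (Partial k r q)
  then obtain x where k: "k = 1 \<or> k = 2" and c: "c = x @ take k (hop_lhs r)"
    and q: "run Q0 (x @ take k (hop_rhs r)) = q"
    using assms(1) by auto
  have a: "a = hop_lhs r ! k"
    using assms(2) Partial by (auto split: if_splits)
  show ?thesis
  proof (cases "k = 2")
    case True
    then have "c @ [a] = x @ hop_lhs r" "run Q0 (x @ hop_rhs r) = delta q (hop_rhs r ! 2)"
      using c q a by (cases r; simp add: hop_lhs_def hop_rhs_def)+
    moreover have "hop (x @ hop_lhs r) (x @ hop_rhs r)"
      unfolding hop_iff by (metis append_Nil2)
    ultimately show ?thesis
      using assms(2) Partial True a by auto
  next
    case False
    then have "k = 1"
      using k by simp
    then have "s' = Partial 2 r (delta q (hop_rhs r ! 1))"
      using assms(2) Partial a by simp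
    moreover have "c @ [a] = x @ take 2 (hop_lhs r) \<and> run Q0 (x @ take 2 (hop_rhs r)) = delta q (hop_rhs r ! 1)"
      using \<open>k = 1\<close> c q a by (cases r) (simp_all add: hop_lhs_def hop_rhs_def)
    ultimately show ?thesis
      by auto
  qed
qed

lemma candidate_successors_valid:
  assumes "\<forall>s\<in>set S. candidate_valid c s" and "s' \<in> set (candidate_successors (run Q0 c) S a)"
  shows "candidate_valid (c @ [a]) s'"
proof (cases "s' \<in> set (concat (map (\<lambda>s. candidate_step s a) S))")
  case True
  then show ?thesis
    using assms(1) candidate_step_valid by auto
next
  case False
  then obtain r where "a = hop_lhs r ! 0" "s' = Partial 1 r (delta (run Q0 c) (hop_rhs r ! 0))"
    using assms(2) by (auto simp: candidate_successors_def)
  then show ?thesis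
    by (cases r) (auto simp: hop_lhs_def hop_rhs_def)
qed

text \<open>The reachable part of the product of the automaton, the number of pegs read (capped at 2)
  and candidate lists. A list may omit successors, since closure only asks for a subset.\<close>

definition tracked :: "(state \<times> nat \<times> candidate list) list" where
  "tracked = [
    (Q0, 0, []),
    (Q1, 0, [Partial 1 False Q2]),
    (Q2, 1, [Partial 1 True Q1]),
    (Q1, 0, [Partial 1 False Q3]),
    (Q3, 1, [Partial 1 True Q1, Partial 2 False Q4]),
    (Q4, 1, [Partial 1 False Q5]),
    (Q5, 2, [Partial 1 True Q4, Partial 2 True Q1]),
    (Q4, 1, [Partial 1 False Q6]),
    (Q6, 2, [Hopped Q7, Partial 1 True Q4, Partial 2 True Q1]),
    (Q7, 1, [Partial 1 False Q8]),
    (Q8, 2, [Partial 1 True Q7, Partial 2 False Q3]),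
    (Q3, 2, [Hopped Q3, Partial 1 False Q9]),
    (Q9, 2, [Partial 1 True Q3, Partial 2 True Q7]),
    (Q3, 2, [Hopped Q3, Hopped Q7, Partial 1 False Q9]),
    (Q7, 1, []),
    (Q10, 2, [Partial 1 True Q7, Partial 2 False Q11]),
    (Q11, 2, [Partial 1 False Q4]),
    (Q4, 2, [Hopped Q4, Partial 1 True Q11, Partial 2 True Q7]),
    (Q4, 2, [Hopped Q4, Partial 1 False Q6]),
    (Q6, 2, [Hopped Q6, Partial 1 True Q4, Partial 2 False Q12]),
    (Q12, 2, [Partial 1 False Q13]),
    (Q13, 2, [Partial 1 True Q12, Partial 2 True Q4]),
    (Q4, 2, [Hopped Q4, Hopped Q7, Partial 1 False Q6]),
    (Q10, 2, [Partial 1 True Q7]),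
    (Q10, 2, []),
    (Q10, 2, [Partial 2 True Q7]),
    (Q10, 2, [Partial 1 False Q14]),
    (Q14, 2, [Partial 2 False Q7]),
    (Q7, 2, [Hopped Q7, Partial 1 False Q8]),
    (Q8, 2, [Hopped Q8, Partial 1 True Q7]),
    (Q8, 2, [Hopped Q8, Partial 1 True Q7, Partial 2 False Q3]),
    (Q9, 2, [Hopped Q9, Partial 1 True Q3, Partial 2 True Q7]),
    (Q10, 2, [Partial 1 False Q15]),
    (Q15, 2, [Partial 2 False Q8]),
    (Q8, 2, [Hopped Q8, Partial 1 False Q16]),
    (Q16, 2, [Partial 1 True Q8]),
    (Q10, 2, [Partial 2 False Q11]),
    (Q11, 2, [Partial 1 False Q7]),
    (Q7, 2, [Hopped Q7, Partial 1 True Q11]),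
    (Q7, 2, [Hopped Q7]),
    (Q11, 2, [Hopped Q11, Partial 1 False Q4]),
    (Q12, 2, [Hopped Q12, Partial 1 False Q13]),
    (Q13, 2, [Hopped Q13, Partial 1 True Q12, Partial 2 True Q4]),
    (Q10, 2, [Partial 1 False Q11]),
    (Q11, 2, [Hopped Q11]),
    (Q4, 2, [Hopped Q4, Partial 1 True Q11, Partial 2 False Q12]),
    (Q12, 2, [Partial 1 False Q17]),
    (Q17, 2, [Partial 1 True Q12, Partial 2 True Q11]),
    (Q14, 2, [Hopped Q14, Partial 2 False Q7]),
    (Q15, 2, [Hopped Q15, Partial 2 False Q8]),
    (Q16, 2, [Hopped Q16, Partial 1 True Q8]),
    (Q14, 2, [Hopped Q14]),
    (Q15, 2, [Partial 2 False Q14]),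
    (Q14, 2, [Hopped Q14, Partial 1 False Q16]),
    (Q16, 2, [Partial 1 True Q14]),
    (Q11, 2, [Hopped Q11, Partial 1 False Q7]),
    (Q12, 2, [Hopped Q12, Partial 1 False Q17]),
    (Q17, 2, [Hopped Q17, Partial 1 True Q12, Partial 2 True Q11]),
    (Q7, 2, [Hopped Q7, Partial 1 True Q11, Partial 2 False Q12]),
    (Q15, 2, [Hopped Q15, Partial 2 False Q14]),
    (Q16, 2, [Hopped Q16, Partial 1 True Q14])]"

lemma tracked_closed:
  "list_all (\<lambda>(q, k, S). list_all (\<lambda>a. list_ex (\<lambda>(q', k', S').
     q' = delta q a \<and> k' = min 2 (k + of_bool a) \<and> set S' \<subseteq> set (candidate_successors q S a))
     tracked) [False, True]) tracked"
  by code_simp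

lemma tracked_accepting_hop:
  "list_all (\<lambda>(q, k, S). accepting q \<and> k = 2 \<longrightarrow> list_ex accepting [p. Hopped p \<leftarrow> S])
     tracked"
  unfolding accepting_def by code_simp

lemma tracked_invariant:
  "\<exists>(q, k, S) \<in> set tracked.
     q = run Q0 c \<and> k = min 2 (num_pegs c) \<and> (\<forall>s\<in>set S. candidate_valid c s)"
proof (induction c rule: rev_induct)
  case Nil
  show ?case
    by (intro bexI[of _ "(Q0, 0, [])"]) (simp_all add: tracked_def)
next
  case (snoc a c)
  then obtain q k S where "(q, k, S) \<in> set tracked" and q: "q = run Q0 c"
    and k: "k = min 2 (num_pegs c)" and S: "\<forall>s\<in>set S. candidate_valid c s"
    by blast
  have "list_ex (\<lambda>(q', k', S'). q' = delta q a \<and> k' = min 2 (k + of_bool a)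
      \<and> set S' \<subseteq> set (candidate_successors q S a)) tracked"
    using bspec[OF tracked_closed[unfolded list_all_iff] \<open>(q, k, S) \<in> set tracked\<close>]
    by (cases a) simp_all
  then obtain q' k' S' where "(q', k', S') \<in> set tracked" "q' = delta q a"
    "k' = min 2 (k + of_bool a)" "set S' \<subseteq> set (candidate_successors q S a)"
    unfolding list_ex_iff by blast
  moreover have "\<forall>s\<in>set S'. candidate_valid (c @ [a]) s"
    using calculation(4) q S candidate_successors_valid by blast
  ultimately show ?case
    using q k by (intro bexI[of _ "(q', k', S')"]) auto
qed

lemma accepting_hop_forward:
  assumes "accepting (run Q0 c)" and "2 \<le> num_pegs c"
  shows "\<exists>d. hop c d \<and> accepting (run Q0 d)"
proof -
  obtain q k S where "(q, k, S) \<in> set tracked" "q = run Q0 c" "k = 2"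
    and S: "\<forall>s\<in>set S. candidate_valid c s"
    using tracked_invariant[of c] assms(2) by auto
  then have "list_ex accepting [p. Hopped p \<leftarrow> S]"
    using bspec[OF tracked_accepting_hop[unfolded list_all_iff] \<open>(q, k, S) \<in> set tracked\<close>] assms(1)
    by simp
  then obtain p where "Hopped p \<in> set S" "accepting p"
    by (auto simp: list_ex_iff split: candidate.splits)
  then show ?thesis
    using S by fastforce
qed

lemma accepting_imp_reducible: "accepting (run Q0 c) \<Longrightarrow> reducible_to_one c"
proof (induction "num_pegs c" arbitrary: c rule: less_induct)
  case less
  consider "num_pegs c = 0" | "num_pegs c = 1" | "2 \<le> num_pegs c"
    by linarith
  then show ?case
  proof cases
    case 1
    then have "run Q0 c \<in> {Q0, Q1}"
      by (intro run_without_pegs) (auto simp: num_pegs_eq_0_iff)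
    then show ?thesis
      using less.prems by (auto simp: accepting_def)
  next
    case 2
    then show ?thesis
      unfolding reducible_to_one_def by blast
  next
    case 3
    then obtain d where "hop c d" "accepting (run Q0 d)"
      using accepting_hop_forward less.prems by blast
    then show ?thesis
      using less.hyps num_pegs_hop reducible_to_one_hop by fastforce
  qed
qed

theorem reducible_to_one_iff_accepting: "reducible_to_one c \<longleftrightarrow> accepting (run Q0 c)"
  using accepting_imp_reducible reducible_imp_accepting by blast

section \<open>Counting\<close>

definition completions :: "state \<Rightarrow> nat \<Rightarrow> bool list set" where
  "completions q m = {w. w \<noteq> [] \<and> last w \<and> num_pegs w = m \<and> accepting (run q (w @ [False]))}"

lemma completions_0: "completions q 0 = {}"
proof -
  have "0 < num_pegs w" if "w \<noteq> []" "last w" for w :: "bool list"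
    using that append_butlast_last_id[of w] num_pegs_append[of "butlast w" "[last w]"] by simp
  then show ?thesis
    by (fastforce simp: completions_def)
qed

lemma completions_Suc:
  "completions q (Suc m) = Cons False ` completions (delta q False) (Suc m)
     \<union> Cons True ` ((if m = 0 \<and> accepting (delta (delta q True) False) then {[]} else {})
                    \<union> completions (delta q True) m)"
proof (rule set_eqI)
  fix w
  show "w \<in> completions q (Suc m) \<longleftrightarrow> w \<in> Cons False ` completions (delta q False) (Suc m)
     \<union> Cons True ` ((if m = 0 \<and> accepting (delta (delta q True) False) then {[]} else {})
                    \<union> completions (delta q True) m)"
    by (cases w rule: list.exhaust[case_product bool.exhaust]) (auto simp: completions_def)
qed

lemma card_Cons_image_Un:
  "finite A \<Longrightarrow> finite B \<Longrightarrow> card (Cons False ` A \<union> Cons True ` B) = card A + card B"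
  by (subst card_Un_disjoint) (auto simp: card_image)

lemma card_completions_Suc:
  assumes "finite (completions (delta q False) (Suc m))" and "finite (completions (delta q True) m)"
  shows "finite (completions q (Suc m))"
    and "card (completions q (Suc m)) = card (completions (delta q False) (Suc m))
           + of_bool (m = 0 \<and> accepting (delta (delta q True) False)) + card (completions (delta q True) m)"
proof -
  have "[] \<notin> completions (delta q True) m"
    by (simp add: completions_def)
  then show "finite (completions q (Suc m))"
    and "card (completions q (Suc m)) = card (completions (delta q False) (Suc m))
           + of_bool (m = 0 \<and> accepting (delta (delta q True) False)) + card (completions (delta q True) m)"
    using assms unfolding completions_Suc[of q m]
    by (simp_all add: card_Cons_image_Un completions_0)
qed

text \<open>The states reachable from \<open>Q3\<close>, which is the state after reading the left border and the
  first peg.\<close>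

definition inner_states :: "state set" where
  "inner_states = {Q3, Q4, Q6, Q7, Q8, Q9, Q10, Q11, Q12, Q13, Q14, Q15, Q16, Q17}"

lemma delta_inner_states: "q \<in> inner_states \<Longrightarrow> delta q a \<in> inner_states"
  unfolding inner_states_def by (elim insertE) auto

lemma zeros_reach_sink: "q \<in> inner_states \<Longrightarrow> ((\<lambda>p. delta p False) ^^ 3) q \<in> {Q7, Q10}"
  unfolding inner_states_def by (elim insertE) (auto simp: numeral_3_eq_3)

lemma completions_Q10: "completions Q10 m = {}"
  by (simp add: completions_def accepting_def)

lemma completions_Q7: "completions Q7 m = {}"
proof -
  have "run Q7 w = Q10" if "True \<in> set w" for w
    using that by (induction w) auto
  then show ?thesis
    by (fastforce simp: completions_def accepting_def dest: last_in_set)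
qed

fun completion_count :: "state \<Rightarrow> nat \<Rightarrow> int" where
  "completion_count Q3 m = (if m < 3 then int m
     else if even m then 4 * int (m div 2)^2 - 10 * int (m div 2) + 10
     else 4 * int (m div 2)^2 - 6 * int (m div 2) + 5)"
| "completion_count Q4 m = int (m div 2)"
| "completion_count Q6 m = (if m < 2 then int m
     else if even m then 4 * int (m div 2)^2 - 7 * int (m div 2) + 5
     else 4 * int (m div 2)^2 - 3 * int (m div 2) + 3)"
| "completion_count Q8 m = int ((m + 1) div 2)"
| "completion_count Q9 m = (if 2 \<le> m then 3 * int (m div 2) - 2 else 0)"
| "completion_count Q11 m = of_bool (2 \<le> m)"
| "completion_count Q12 m = of_bool (4 \<le> m)"
| "completion_count Q13 m = (if 3 \<le> m then 3 * int ((m - 1) div 2) else of_bool (1 \<le> m))"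
| "completion_count Q14 m = of_bool (1 \<le> m)"
| "completion_count Q15 m = of_bool (3 \<le> m)"
| "completion_count Q16 m = (if 2 \<le> m then 2 * int (m div 2) - 1 else 0)"
| "completion_count Q17 m = (if 3 \<le> m then 2 * int ((m - 1) div 2) else of_bool (1 \<le> m))"
| "completion_count _ m = 0"

lemma completion_count_0: "completion_count q 0 = 0"
  by (cases q) auto

lemma nat_parity_cases:
  fixes m :: nat
  obtains "m = 0" | j where "m = 2 * j + 1" | j where "m = 2 * j + 2"
proof (cases m)
  case (Suc k)
  then show ?thesis
    using that by (cases "even k") (auto elim!: evenE oddE)
qed (use that in simp)

lemma completion_count_Suc:
  "q \<in> inner_states \<Longrightarrow> completion_count q (Suc m) = completion_count (delta q False) (Suc m)
     + of_bool (m = 0 \<and> accepting (delta (delta q True) False)) + completion_count (delta q True) m"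
  unfolding inner_states_def
  by (elim insertE; cases m rule: nat_parity_cases)
    (simp_all add: accepting_def power2_eq_square algebra_simps)

lemma card_completions:
  "q \<in> inner_states
     \<Longrightarrow> finite (completions q m) \<and> int (card (completions q m)) = completion_count q m"
proof (induction m arbitrary: q)
  case 0
  then show ?case
    by (simp add: completions_0 completion_count_0)
next
  case (Suc m)
  let ?P = "\<lambda>q. finite (completions q (Suc m))
    \<and> int (card (completions q (Suc m))) = completion_count q (Suc m)"
  have IH: "finite (completions (delta q True) m)
      \<and> int (card (completions (delta q True) m)) = completion_count (delta q True) m"
    if "q \<in> inner_states" for q
    using Suc.IH delta_inner_states that by blast
  have sink: "?P q" if "q \<in> {Q7, Q10}" for q
    using that by (auto simp: completions_Q7 completions_Q10)
  \<comment> \<open>Reading \<open>False\<close> keeps the number of pegs, so we induct along the path of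
    \<open>False\<close>-transitions, which reaches a sink within three steps.\<close>
  have "?P q" if "q \<in> inner_states" "((\<lambda>p. delta p False) ^^ k) q \<in> {Q7, Q10}" for k q
    using that
  proof (induction k arbitrary: q)
    case 0
    then show ?case
      using sink by simp
  next
    case (Suc k)
    have "((\<lambda>p. delta p False) ^^ k) (delta q False) \<in> {Q7, Q10}"
      using Suc.prems(2) by (simp only: funpow_Suc_right comp_def)
    then have "?P (delta q False)"
      using Suc.IH Suc.prems(1) delta_inner_states by blast
    then show ?case
      using Suc.prems(1) IH card_completions_Suc[of q m] completion_count_Suc[of q m]
      by simp
  qed
  then show ?case
    using Suc.prems zeros_reach_sink by blast
qed

lemma N_eq: "1 \<le> n \<Longrightarrow> int (N n) = of_bool (n = 1) + completion_count Q3 (n - 1)"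
proof -
  assume n: "1 \<le> n"
  have "{u. u \<noteq> [] \<and> hd u \<and> last u \<and> num_pegs u = n \<and> reducible_to_one ([False] @ u @ [False])}
      = Cons True ` ((if n = 1 then {[]} else {}) \<union> completions Q3 (n - 1))" (is "?L = ?R")
  proof (intro set_eqI iffI)
    fix u
    assume "u \<in> ?L"
    then obtain w where "u = True # w"
      by (cases u) auto
    then show "u \<in> ?R"
      using \<open>u \<in> ?L\<close> n
      by (cases "w = []") (auto simp: reducible_to_one_iff_accepting completions_def)
  next
    fix u
    assume "u \<in> ?R"
    then show "u \<in> ?L"
      using n by (auto simp: reducible_to_one_iff_accepting completions_def accepting_def split: if_splits)
  qed
  moreover have "finite (completions Q3 (n - 1))"
    and "int (card (completions Q3 (n - 1))) = completion_count Q3 (n - 1)"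
    using card_completions[of Q3 "n - 1"] by (simp_all add: inner_states_def)
  moreover have "[] \<notin> completions Q3 (n - 1)"
    by (simp add: completions_def)
  ultimately show ?thesis
    unfolding N_def by (simp add: card_image card_insert_if completions_0)
qed

theorem mainTheorem2:
  fixes n :: nat
  assumes "n \<ge> 1"
  shows "int (N n) =
    (if n = 1 then 1
     else if n = 2 then 1
     else if n = 3 then 2
     else if even n then (int n)^2 - 7 * int n + 15
     else (int n)^2 - 7 * int n + 16)"
  using assms
  by (cases n rule: nat_parity_cases) (auto simp: N_eq algebra_simps power2_eq_square)

end
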